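(* Let $n\in\mathbb{N}_0$. For each $\mathrm{Z}\in\{\mathrm{I},\mathrm{II},\mathrm{III}\}$, the system $(\gamma^{\mathrm{Z}}b_{n,k})_{k=0}^n$ is a basis of $\mathbb{P}_n([0,1])$ (polynomials of degree $\le n$ on $[0,1]$).
   Context: $\widehat T$ is the triangle with vertices $(0,0),(1,0),(0,1)$. $P_m^{(\alpha,\beta)}$ are the Jacobi polynomials (orthogonal on $[-1,1]$ w.r.t. $(1-x)^\alpha(1+x)^\beta$, normalized by $P_m^{(\alpha,\beta)}(1)=(\alpha+1)_m/m!$), and $P_k^{(0,0)}$ the Legendre polynomials. For $0\le k\le n$, $b_{n,k}(x_1,x_2):=(x_1+x_2)^k P^{(0,2k+1)}_{n-k}(2(x_1+x_2)-1)\,P_k^{(0,0)}\!\left(\frac{x_1-x_2}{x_1+x_2}\right)$ (a polynomial of degree $n$). The restriction operators are $\gamma^{\mathrm{I}}u:=u(\cdot,0)$, $\gamma^{\mathrm{II}}u:=u(0,\cdot)$, $\gamma^{\mathrm{III}}u:=u(1-\cdot,\cdot)$, mapping functions on $\widehat T$ to functions on $[0,1]$. *)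

theory Defs
  imports "HOL-Analysis.Analysis" "HOL-Computational_Algebra.Polynomial"
begin

text \<open>Jacobi polynomials P_m^(alpha,beta) via the classical explicit formula;
  normalization P_m^(alpha,beta)(1) = (m+alpha choose m) = (alpha+1)_m / m!.\<close>
definition jacobi :: "nat \<Rightarrow> real \<Rightarrow> real \<Rightarrow> real \<Rightarrow> real" where
  "jacobi m \<alpha> \<beta> x =
     (\<Sum>s\<le>m. ((of_nat m + \<alpha>) gchoose (m - s)) * ((of_nat m + \<beta>) gchoose s)
              * ((x - 1) / 2) ^ s * ((x + 1) / 2) ^ (m - s))"

definition legendre :: "nat \<Rightarrow> real \<Rightarrow> real" where
  "legendre k x = jacobi k 0 0 x"

text \<open>At x1+x2 = 0 (only the origin on the triangle) the factor
  (x1+x2)^k vanishes for k>0, and for k=0 the Legendre factor is 1, so the pointwise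
  formula agrees with the polynomial b_{n,k} everywhere on the triangle.\<close>
definition bnk :: "nat \<Rightarrow> nat \<Rightarrow> real \<Rightarrow> real \<Rightarrow> real" where
  "bnk n k x1 x2 = (x1 + x2) ^ k * jacobi (n - k) 0 (2 * of_nat k + 1) (2 * (x1 + x2) - 1)
                    * legendre k ((x1 - x2) / (x1 + x2))"

definition gammaI :: "(real \<Rightarrow> real \<Rightarrow> real) \<Rightarrow> real \<Rightarrow> real" where
  "gammaI u t = u t 0"
definition gammaII :: "(real \<Rightarrow> real \<Rightarrow> real) \<Rightarrow> real \<Rightarrow> real" where
  "gammaII u t = u 0 t"
definition gammaIII :: "(real \<Rightarrow> real \<Rightarrow> real) \<Rightarrow> real \<Rightarrow> real" where
  "gammaIII u t = u (1 - t) t"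

definition is_basis_Pn01 :: "nat \<Rightarrow> (nat \<Rightarrow> real \<Rightarrow> real) \<Rightarrow> bool" where
  "is_basis_Pn01 n f \<longleftrightarrow>
     (\<forall>k\<le>n. \<exists>p :: real poly. degree p \<le> n \<and> (\<forall>t\<in>{0..1}. f k t = poly p t)) \<and>
     (\<forall>c :: nat \<Rightarrow> real. (\<forall>t\<in>{0..1}. (\<Sum>k\<le>n. c k * f k t) = 0) \<longrightarrow> (\<forall>k\<le>n. c k = 0)) \<and>
     (\<forall>q :: real poly. degree q \<le> n \<longrightarrow>
        (\<exists>c :: nat \<Rightarrow> real. \<forall>t\<in>{0..1}. poly q t = (\<Sum>k\<le>n. c k * f k t)))"

end

theory Submission imports Defs begin

text \<open>Each restricted family is represented by polynomials whose coefficient matrix is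
  triangular with nonzero diagonal. On the legs x2 = 0 and x1 = 0 of the triangle the Legendre
  factor of b(n,k) is +1 or -1, so its restriction is \<open>\<plusminus>t^k\<close> times a Jacobi polynomial not
  vanishing at t = 0, i.e. it vanishes at 0 to order exactly k. On the hypotenuse x1 + x2 = 1
  the Jacobi factor equals 1, so the restriction is a Legendre polynomial of exact degree k.\<close>

lemma lower_triangular_system_unique:
  fixes M :: "nat \<Rightarrow> nat \<Rightarrow> 'a::field"
  assumes diag: "\<And>k. k \<le> n \<Longrightarrow> M k k \<noteq> 0"
    and lower: "\<And>k j. k \<le> n \<Longrightarrow> j < k \<Longrightarrow> M k j = 0"
    and zero: "\<And>j. j \<le> n \<Longrightarrow> (\<Sum>k\<le>n. c k * M k j) = 0"
  shows "k \<le> n \<Longrightarrow> c k = 0"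
proof (induction k rule: less_induct)
  case (less k)
  have "(\<Sum>i\<le>n. c i * M i k) = c k * M k k"
  proof (rule sum.mono_neutral_right[where S = "{k}", simplified])
    show "\<forall>i\<in>{..n} - {k}. c i * M i k = 0"
    proof
      fix i assume i: "i \<in> {..n} - {k}"
      show "c i * M i k = 0"
      proof (cases "i < k")
        case True
        then show ?thesis using less by simp
      next
        case False
        then show ?thesis using i lower by simp
      qed
    qed
  qed (use less.prems in auto)
  then show "c k = 0" using zero[OF less.prems] diag[OF less.prems] by simp
qed

lemma lower_triangular_system_solvable:
  fixes M :: "nat \<Rightarrow> nat \<Rightarrow> 'a::field"
  assumes diag: "\<And>k. k \<le> n \<Longrightarrow> M k k \<noteq> 0"
    and lower: "\<And>k j. k \<le> n \<Longrightarrow> j < k \<Longrightarrow> M k j = 0"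
  shows "\<exists>c. \<forall>j\<le>n. (\<Sum>k\<le>n. c k * M k j) = d j"
  using assms
proof (induction n)
  case 0
  then show ?case by (intro exI[of _ "\<lambda>k. d 0 / M 0 0"]) auto
next
  case (Suc n)
  then obtain c where c: "\<forall>j\<le>n. (\<Sum>k\<le>n. c k * M k j) = d j" by auto
  define c' where
    "c' = c(Suc n := (d (Suc n) - (\<Sum>k\<le>n. c k * M k (Suc n))) / M (Suc n) (Suc n))"
  have split: "(\<Sum>k\<le>Suc n. c' k * M k j) = (\<Sum>k\<le>n. c k * M k j) + c' (Suc n) * M (Suc n) j"
    for j unfolding c'_def by (auto intro!: sum.cong)
  have "(\<Sum>k\<le>Suc n. c' k * M k j) = d j" if "j \<le> Suc n" for j
  proof (cases "j = Suc n")
    case True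
    then show ?thesis using Suc.prems unfolding split by (simp add: c'_def)
  next
    case False
    then show ?thesis using that c Suc.prems unfolding split by auto
  qed
  then show ?case by blast
qed

lemma sum_atMost_reflect: "(\<Sum>k\<le>n. g (n - k)) = (\<Sum>k\<le>(n::nat). g k)"
  using sum.atLeastAtMost_rev[of g 0 n] by (simp add: atMost_atLeast0)

text \<open>The upper-triangular case is the lower-triangular one with rows and columns
  indexed backwards (\<open>k \<mapsto> n - k\<close>).\<close>

lemma upper_triangular_system_unique:
  fixes M :: "nat \<Rightarrow> nat \<Rightarrow> 'a::field"
  assumes diag: "\<And>k. k \<le> n \<Longrightarrow> M k k \<noteq> 0"
    and upper: "\<And>k j. k \<le> n \<Longrightarrow> k < j \<Longrightarrow> M k j = 0"
    and zero: "\<And>j. j \<le> n \<Longrightarrow> (\<Sum>k\<le>n. c k * M k j) = 0"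
    and "k \<le> n"
  shows "c k = 0"
proof -
  have "c (n - (n - k)) = 0"
  proof (rule lower_triangular_system_unique[of n "\<lambda>k j. M (n - k) (n - j)" "\<lambda>i. c (n - i)"])
    show "\<And>j. j \<le> n \<Longrightarrow> (\<Sum>i\<le>n. c (n - i) * M (n - i) (n - j)) = 0"
      using sum_atMost_reflect[of "\<lambda>i. c i * M i _" n] zero by simp
  qed (use diag upper in auto)
  then show ?thesis using \<open>k \<le> n\<close> by simp
qed

lemma upper_triangular_system_solvable:
  fixes M :: "nat \<Rightarrow> nat \<Rightarrow> 'a::field"
  assumes diag: "\<And>k. k \<le> n \<Longrightarrow> M k k \<noteq> 0"
    and upper: "\<And>k j. k \<le> n \<Longrightarrow> k < j \<Longrightarrow> M k j = 0"
  shows "\<exists>c. \<forall>j\<le>n. (\<Sum>k\<le>n. c k * M k j) = d j"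
proof -
  obtain c where c: "\<forall>j\<le>n. (\<Sum>k\<le>n. c k * M (n - k) (n - j)) = d (n - j)"
    using lower_triangular_system_solvable[of n "\<lambda>k j. M (n - k) (n - j)" "\<lambda>j. d (n - j)"]
      diag upper by auto
  have "(\<Sum>k\<le>n. c (n - k) * M k j) = d j" if "j \<le> n" for j
  proof -
    have "(\<Sum>k\<le>n. c (n - k) * M k j) = (\<Sum>k\<le>n. c (n - (n - k)) * M (n - k) j)"
      using sum_atMost_reflect[of "\<lambda>k. c (n - k) * M k j" n] by simp
    also have "\<dots> = (\<Sum>k\<le>n. c k * M (n - k) j)" by (rule sum.cong) auto
    also have "\<dots> = d j" using c[rule_format, of "n - j"] that by simp
    finally show ?thesis .
  qed
  then show ?thesis by (intro exI[of _ "\<lambda>k. c (n - k)"]) blast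
qed

lemma poly_eq_0_if_infinite_roots:
  fixes p :: "'a::idom poly"
  assumes "infinite A" and "\<And>x. x \<in> A \<Longrightarrow> poly p x = 0"
  shows "p = 0"
  using assms poly_roots_finite[of p] finite_subset[of A "{x. poly p x = 0}"] by blast

lemma is_basis_Pn01_if_coeff_system_bijective:
  fixes p :: "nat \<Rightarrow> real poly"
  assumes f_poly: "\<And>k t. k \<le> n \<Longrightarrow> t \<in> {0..1} \<Longrightarrow> f k t = poly (p k) t"
    and degree: "\<And>k. k \<le> n \<Longrightarrow> degree (p k) \<le> n"
    and solvable: "\<And>d. \<exists>c. \<forall>j\<le>n. (\<Sum>k\<le>n. c k * coeff (p k) j) = d j"
    and unique: "\<And>c k. (\<And>j. j \<le> n \<Longrightarrow> (\<Sum>k\<le>n. c k * coeff (p k) j) = 0) \<Longrightarrow> k \<le> n \<Longrightarrow> c k = 0"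
  shows "is_basis_Pn01 n f"
proof -
  define comb where "comb c = (\<Sum>k\<le>n. smult (c k) (p k))" for c
  have poly_comb: "poly (comb c) t = (\<Sum>k\<le>n. c k * f k t)" if "t \<in> {0..1}" for c t
    unfolding comb_def poly_sum using f_poly that by (auto intro!: sum.cong)
  have coeff_comb: "coeff (comb c) j = (\<Sum>k\<le>n. c k * coeff (p k) j)" for c j
    unfolding comb_def by (simp add: coeff_sum)
  have independent: "c k = 0"
    if "\<forall>t\<in>{0..1}. (\<Sum>k\<le>n. c k * f k t) = 0" "k \<le> n" for c k
  proof -
    have "comb c = 0"
      by (rule poly_eq_0_if_infinite_roots[of "{0..1}"]) (use that poly_comb in auto)
    then show ?thesis using unique[of c] coeff_comb that(2) by (metis coeff_0)
  qed
  have spanning: "\<exists>c. \<forall>t\<in>{0..1}. poly q t = (\<Sum>k\<le>n. c k * f k t)" if "degree q \<le> n" for q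
  proof -
    obtain c where c: "\<forall>j\<le>n. (\<Sum>k\<le>n. c k * coeff (p k) j) = coeff q j"
      using solvable by blast
    have "coeff (comb c) j = coeff q j" for j
    proof (cases "j \<le> n")
      case False
      then have "coeff q j = 0" "\<And>k. k \<le> n \<Longrightarrow> coeff (p k) j = 0"
        using that degree by (meson coeff_eq_0 le_trans not_le)+
      then show ?thesis unfolding coeff_comb by simp
    qed (use c coeff_comb in auto)
    then have "comb c = q" by (rule poly_eqI)
    then show ?thesis using poly_comb by blast
  qed
  show ?thesis
    unfolding is_basis_Pn01_def using f_poly degree independent spanning by blast
qed

lemma is_basis_Pn01_lower_triangular:
  fixes p :: "nat \<Rightarrow> real poly"
  assumes "\<And>k t. k \<le> n \<Longrightarrow> t \<in> {0..1} \<Longrightarrow> f k t = poly (p k) t"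
    and "\<And>k. k \<le> n \<Longrightarrow> degree (p k) \<le> n"
    and diag: "\<And>k. k \<le> n \<Longrightarrow> coeff (p k) k \<noteq> 0"
    and lower: "\<And>k j. k \<le> n \<Longrightarrow> j < k \<Longrightarrow> coeff (p k) j = 0"
  shows "is_basis_Pn01 n f"
proof (rule is_basis_Pn01_if_coeff_system_bijective[of n f p])
  show "\<exists>c. \<forall>j\<le>n. (\<Sum>k\<le>n. c k * coeff (p k) j) = d j" for d
    by (rule lower_triangular_system_solvable[OF diag lower])
  show "c k = 0" if "\<And>j. j \<le> n \<Longrightarrow> (\<Sum>k\<le>n. c k * coeff (p k) j) = 0" "k \<le> n" for c k
    by (rule lower_triangular_system_unique[OF diag lower that])
qed (use assms in blast)+

lemma is_basis_Pn01_upper_triangular: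
  fixes p :: "nat \<Rightarrow> real poly"
  assumes "\<And>k t. k \<le> n \<Longrightarrow> t \<in> {0..1} \<Longrightarrow> f k t = poly (p k) t"
    and degree: "\<And>k. k \<le> n \<Longrightarrow> degree (p k) \<le> k"
    and diag: "\<And>k. k \<le> n \<Longrightarrow> coeff (p k) k \<noteq> 0"
  shows "is_basis_Pn01 n f"
proof -
  have upper: "\<And>k j. k \<le> n \<Longrightarrow> k < j \<Longrightarrow> coeff (p k) j = 0"
    using degree by (meson coeff_eq_0 le_less_trans)
  show ?thesis
  proof (rule is_basis_Pn01_if_coeff_system_bijective[of n f p])
    show "\<exists>c. \<forall>j\<le>n. (\<Sum>k\<le>n. c k * coeff (p k) j) = d j" for d
      by (rule upper_triangular_system_solvable[OF diag upper])
    show "c k = 0" if "\<And>j. j \<le> n \<Longrightarrow> (\<Sum>k\<le>n. c k * coeff (p k) j) = 0" "k \<le> n" for c k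
      by (rule upper_triangular_system_unique[OF diag upper that])
    show "degree (p k) \<le> n" if "k \<le> n" for k
      using degree[OF that] that by (rule le_trans)
  qed (use assms in blast)
qed

text \<open>The Jacobi polynomial pulled back to [0,1] by \<open>x = 2t - 1\<close>, where the factors
  \<open>(x - 1)/2\<close> and \<open>(x + 1)/2\<close> of the explicit formula become \<open>t - 1\<close> and \<open>t\<close>.\<close>

definition shifted_jacobi_poly :: "nat \<Rightarrow> real \<Rightarrow> real \<Rightarrow> real poly" where
  "shifted_jacobi_poly m \<alpha> \<beta> =
     (\<Sum>s\<le>m. smult (((of_nat m + \<alpha>) gchoose (m - s)) * ((of_nat m + \<beta>) gchoose s))
                   ([:-1, 1:] ^ s * [:0, 1:] ^ (m - s)))"

lemma poly_shifted_jacobi_poly: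
  "poly (shifted_jacobi_poly m \<alpha> \<beta>) t = jacobi m \<alpha> \<beta> (2 * t - 1)"
proof -
  have shift: "(2 * t - 1 - 1) / 2 = t - 1" "(2 * t - 1 + 1) / 2 = t" by auto
  show ?thesis
    unfolding shifted_jacobi_poly_def jacobi_def poly_sum shift by (simp add: mult.assoc)
qed

lemma degree_shifted_jacobi_poly: "degree (shifted_jacobi_poly m \<alpha> \<beta>) \<le> m"
  unfolding shifted_jacobi_poly_def
proof (rule degree_sum_le[OF finite_atMost])
  fix s assume "s \<in> {..m}"
  then have "degree ([:-1, 1:] ^ s * [:0, 1:] ^ (m - s) :: real poly) \<le> m"
    using degree_mult_le[of "[:-1, 1:] ^ s" "[:0::real, 1:] ^ (m - s)"]
    by (simp add: degree_linear_power)
  then show "degree (smult (((of_nat m + \<alpha>) gchoose (m - s)) * ((of_nat m + \<beta>) gchoose s))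
      ([:-1, 1:] ^ s * [:0, 1:] ^ (m - s))) \<le> m"
    by (meson degree_smult_le order_trans)
qed

lemma coeff_0_shifted_jacobi_poly:
  "coeff (shifted_jacobi_poly m \<alpha> \<beta>) 0 = (-1) ^ m * ((of_nat m + \<beta>) gchoose m)"
proof -
  have "coeff (shifted_jacobi_poly m \<alpha> \<beta>) 0 = poly (shifted_jacobi_poly m \<alpha> \<beta>) 0"
    by (simp add: poly_0_coeff_0)
  also have "\<dots> = (\<Sum>s\<le>m. if s = m then ((of_nat m + \<beta>) gchoose m) * (-1) ^ m else 0)"
    unfolding shifted_jacobi_poly_def poly_sum by (rule sum.cong) auto
  finally show ?thesis by simp
qed

lemma coeff_top_shifted_jacobi_poly:
  "coeff (shifted_jacobi_poly m \<alpha> \<beta>) m =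
     (\<Sum>s\<le>m. ((of_nat m + \<alpha>) gchoose (m - s)) * ((of_nat m + \<beta>) gchoose s))"
proof -
  have "coeff ([:-1, 1:] ^ s * [:0, 1:] ^ (m - s) :: real poly) m = 1" if "s \<le> m" for s
    using coeff_mult_degree_sum[of "[:-1, 1:] ^ s" "[:0::real, 1:] ^ (m - s)"] that
    by (simp add: degree_linear_power coeff_linear_power)
  then show ?thesis
    unfolding shifted_jacobi_poly_def coeff_sum by (auto intro: sum.cong)
qed

lemma of_nat_gchoose: "(of_nat a :: real) gchoose k = of_nat (a choose k)"
  by (simp add: binomial_gbinomial)

lemma coeff_0_shifted_jacobi_poly_nonzero:
  assumes "\<beta> = of_nat b"
  shows "coeff (shifted_jacobi_poly m \<alpha> \<beta>) 0 \<noteq> 0"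
  unfolding coeff_0_shifted_jacobi_poly assms using of_nat_gchoose[of "m + b" m] by simp

lemma coeff_top_shifted_jacobi_poly_nonzero:
  "coeff (shifted_jacobi_poly m (of_nat a) (of_nat b)) m \<noteq> 0"
proof -
  define w where "w s = of_nat ((m + a) choose (m - s)) * (of_nat ((m + b) choose s) :: real)" for s
  have top: "coeff (shifted_jacobi_poly m (of_nat a) (of_nat b)) m = (\<Sum>s\<le>m. w s)"
    unfolding coeff_top_shifted_jacobi_poly w_def of_nat_add[symmetric] of_nat_gchoose ..
  have "1 \<le> w 0"
    using zero_less_binomial[of m "m + a"] by (simp add: w_def Suc_le_eq)
  also have "w 0 \<le> (\<Sum>s\<le>m. w s)"
    by (rule member_le_sum) (simp_all add: w_def)
  finally show ?thesis unfolding top by simp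
qed

lemma jacobi_at_1: "jacobi m 0 \<beta> 1 = 1"
proof -
  have "jacobi m 0 \<beta> 1 = (\<Sum>s\<le>m. if s = 0 then of_nat m gchoose m else 0)"
    unfolding jacobi_def by (rule sum.cong) auto
  then show ?thesis by (simp add: of_nat_gchoose)
qed

lemma legendre_0: "legendre 0 x = 1"
  unfolding legendre_def jacobi_def by simp

lemma legendre_at_1: "legendre k 1 = 1"
  unfolding legendre_def by (rule jacobi_at_1)

lemma legendre_at_minus_1: "legendre k (-1) = (-1) ^ k"
proof -
  have "legendre k (-1) = (\<Sum>s\<le>k. if s = k then (of_nat k gchoose k) * (-1) ^ k else 0)"
    unfolding legendre_def jacobi_def by (rule sum.cong) auto
  then show ?thesis by (simp add: of_nat_gchoose)
qed

text \<open>The origin needs a separate case: there the Legendre factor is evaluated at the junk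
  value \<open>0 / 0 = 0\<close>, which only matters for k = 0, where it is 1 anyway.\<close>

lemma gammaI_bnk: "gammaI (bnk n k) t = t ^ k * jacobi (n - k) 0 (2 * of_nat k + 1) (2 * t - 1)"
  by (cases "t = 0"; cases k) (simp_all add: gammaI_def bnk_def legendre_0 legendre_at_1)

lemma gammaII_bnk:
  "gammaII (bnk n k) t = (-1) ^ k * (t ^ k * jacobi (n - k) 0 (2 * of_nat k + 1) (2 * t - 1))"
proof (cases "t = 0")
  case True
  then show ?thesis by (cases k) (simp_all add: gammaII_def bnk_def legendre_0)
next
  case False
  then have "(0 - t) / (0 + t) = -1" by simp
  then show ?thesis by (simp add: gammaII_def bnk_def legendre_at_minus_1)
qed

lemma gammaIII_bnk: "gammaIII (bnk n k) t = legendre k (1 - 2 * t)"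
proof -
  have "(1 - t - t) / (1 - t + t) = 1 - 2 * t" "2 * (1 - t + t) - 1 = (1::real)" by auto
  then show ?thesis by (simp add: gammaIII_def bnk_def jacobi_at_1)
qed

lemma is_basis_Pn01_monom_times_shifted_jacobi:
  assumes sign: "\<And>k. \<sigma> k \<noteq> (0::real)"
    and f: "\<And>k t. k \<le> n \<Longrightarrow>
              f k t = \<sigma> k * (t ^ k * jacobi (n - k) 0 (2 * of_nat k + 1) (2 * t - 1))"
  shows "is_basis_Pn01 n f"
proof (rule is_basis_Pn01_lower_triangular)
  define p where "p k = smult (\<sigma> k) (monom 1 k * shifted_jacobi_poly (n - k) 0 (2 * of_nat k + 1))"
    for k
  show "f k t = poly (p k) t" if "k \<le> n" for k t
    using f[OF that] by (simp add: p_def poly_monom poly_shifted_jacobi_poly)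
  show "degree (p k) \<le> n" if "k \<le> n" for k
  proof -
    have "degree (p k) \<le> k + degree (shifted_jacobi_poly (n - k) 0 (2 * of_nat k + 1))"
      unfolding p_def
      using degree_mult_le[of "monom (1::real) k"] degree_smult_le order_trans
      by (metis degree_monom_eq zero_neq_one)
    then show ?thesis using degree_shifted_jacobi_poly[of "n - k" 0 "2 * of_nat k + 1"] that by linarith
  qed
  show "coeff (p k) k \<noteq> 0" for k
    using sign coeff_0_shifted_jacobi_poly_nonzero[of "2 * of_nat k + 1" "2 * k + 1"]
    by (simp add: p_def coeff_monom_mult)
  show "coeff (p k) j = 0" if "j < k" for k j
    using that by (simp add: p_def coeff_monom_mult)
qed

lemma is_basis_Pn01_reflected_legendre:
  assumes f: "\<And>k t. k \<le> n \<Longrightarrow> f k t = legendre k (1 - 2 * t)"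
  shows "is_basis_Pn01 n f"
proof (rule is_basis_Pn01_upper_triangular)
  define p where "p k = pcompose (shifted_jacobi_poly k 0 0) [:1, -1:]" for k
  show "f k t = poly (p k) t" if "k \<le> n" for k t
    using f[OF that] by (simp add: p_def poly_pcompose poly_shifted_jacobi_poly legendre_def)
  have top: "coeff (shifted_jacobi_poly k 0 0) k \<noteq> 0" for k
    using coeff_top_shifted_jacobi_poly_nonzero[of k 0 0] by simp
  then have "degree (shifted_jacobi_poly k 0 0) = k" for k
    by (meson degree_shifted_jacobi_poly le_antisym le_degree)
  then show "degree (p k) \<le> k" "coeff (p k) k \<noteq> 0" for k
    using lead_coeff_comp[of "[:1, -1:]" "shifted_jacobi_poly k 0 0"] top
    by (simp_all add: p_def degree_pcompose)
qed

theorem lemma12: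
  fixes n :: nat
  shows "\<forall>\<gamma> \<in> {gammaI, gammaII, gammaIII}. is_basis_Pn01 n (\<lambda>k. \<gamma> (bnk n k))"
proof -
  have "is_basis_Pn01 n (\<lambda>k. gammaI (bnk n k))"
    by (rule is_basis_Pn01_monom_times_shifted_jacobi[where \<sigma> = "\<lambda>_. 1"]) (simp_all add: gammaI_bnk)
  moreover have "is_basis_Pn01 n (\<lambda>k. gammaII (bnk n k))"
    by (rule is_basis_Pn01_monom_times_shifted_jacobi[where \<sigma> = "\<lambda>k. (-1) ^ k"])
      (simp_all add: gammaII_bnk)
  moreover have "is_basis_Pn01 n (\<lambda>k. gammaIII (bnk n k))"
    by (rule is_basis_Pn01_reflected_legendre) (simp add: gammaIII_bnk)
  ultimately show ?thesis by simp
qed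

end
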